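(* Under the partial cost model, for every positive integer $k$ there is a request sequence $\sigma$ on a list of two items with $\mathrm{TS}(\sigma)=\mathrm{MTFO}(\sigma)=\mathrm{MTFE}(\sigma)=10k$ and $\mathrm{OPT}(\sigma)\le 6k$; in particular each of TS, MTFO and MTFE has cost at least $\frac{5}{3}\mathrm{OPT}(\sigma)$ on these sequences. (Hence the bound $\frac53$ of the best of the three algorithms is tight in the partial cost model.)
   Context: Static list update: serving a request to the item at position $i$ costs $i-1$ (partial cost model); the accessed item may be moved closer to the front for free; two adjacent items may be swapped at cost $1$. $A(\sigma)$ is the total cost of algorithm $A$ and $\mathrm{OPT}(\sigma)$ the minimum cost of any offline algorithm from the same initial list. MTFO moves a requested item to the front on the 1st, 3rd, 5th, ... request to that item; MTFE on the 2nd, 4th, 6th, ... request; otherwise they leave it in place. TS (Timestamp): on a request to item $x$, if $x$ has been requested before and some item preceding $x$ has been requested at most once since the previous request to $x$, then $x$ is moved to immediately in front of the frontmost such item; otherwise nothing moves. These three algorithms make no paid exchanges. *)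

theory Defs
  imports Main
begin

(* Position of an item in a list, 0-based.  Under the partial cost model,
   serving a request to the item at (1-based) position i costs i-1, i.e.
   exactly the 0-based position. *)
fun pos :: "'a list \<Rightarrow> 'a \<Rightarrow> nat" where
  "pos [] x = 0"
| "pos (y # ys) x = (if y = x then 0 else Suc (pos ys x))"

definition move_to :: "nat \<Rightarrow> 'a \<Rightarrow> 'a list \<Rightarrow> 'a list" where
  "move_to j x s = take j (remove1 x s) @ x # drop j (remove1 x s)"

definition swap_adj :: "nat \<Rightarrow> 'a list \<Rightarrow> 'a list" where
  "swap_adj i s = (if Suc i < length s then s[i := s ! Suc i, Suc i := s ! i] else s)"

definition swaps :: "nat list \<Rightarrow> 'a list \<Rightarrow> 'a list" where
  "swaps sw s = fold swap_adj sw s"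

(* offline executions: before each request any number of paid exchanges
   (cost 1 each), then the access (cost = 0-based position), then a free
   move of the accessed item closer to the front (or no move: j = position) *)
inductive offline_exec :: "'a list \<Rightarrow> 'a list \<Rightarrow> nat \<Rightarrow> bool" where
  Nil: "offline_exec s [] 0"
| Cons: "\<lbrakk> s' = swaps sw s; j \<le> pos s' x;
           offline_exec (move_to j x s') rs c \<rbrakk>
         \<Longrightarrow> offline_exec s (x # rs) (length sw + pos s' x + c)"

definition OPT :: "'a list \<Rightarrow> 'a list \<Rightarrow> nat" where
  "OPT s0 \<sigma> = (LEAST c. offline_exec s0 \<sigma> c)"

(* online algorithms without paid exchanges: step function taking the
   history of previous requests, the current list and the current request,
   and returning the new list *)
fun online_cost :: "('a list \<Rightarrow> 'a list \<Rightarrow> 'a \<Rightarrow> 'a list)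
                     \<Rightarrow> 'a list \<Rightarrow> 'a list \<Rightarrow> 'a list \<Rightarrow> nat" where
  "online_cost A h s [] = 0"
| "online_cost A h s (x # rs) = pos s x + online_cost A (h @ [x]) (A h s x) rs"

(* MTFO: move to front on the 1st, 3rd, 5th, ... request to x,
   i.e. when the number of previous requests to x is even *)
definition mtfo_step :: "'a list \<Rightarrow> 'a list \<Rightarrow> 'a \<Rightarrow> 'a list" where
  "mtfo_step h s x = (if even (count_list h x) then move_to 0 x s else s)"

(* MTFE: move to front on the 2nd, 4th, 6th, ... request to x *)
definition mtfe_step :: "'a list \<Rightarrow> 'a list \<Rightarrow> 'a \<Rightarrow> 'a list" where
  "mtfe_step h s x = (if odd (count_list h x) then move_to 0 x s else s)"

(* TS: if x was requested before, consider the items preceding x that were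
   requested at most once since the previous request to x; if there is any,
   move x to immediately in front of the frontmost such item *)
definition ts_step :: "'a list \<Rightarrow> 'a list \<Rightarrow> 'a \<Rightarrow> 'a list" where
  "ts_step h s x =
     (if x \<notin> set h then s
      else let seg = rev (takeWhile (\<lambda>y. y \<noteq> x) (rev h));
               cands = filter (\<lambda>y. count_list seg y \<le> 1) (take (pos s x) s)
           in if cands = [] then s else move_to (pos s (hd cands)) x s)"

definition MTFO :: "'a list \<Rightarrow> 'a list \<Rightarrow> nat" where
  "MTFO s0 \<sigma> = online_cost mtfo_step [] s0 \<sigma>"

definition MTFE :: "'a list \<Rightarrow> 'a list \<Rightarrow> nat" where
  "MTFE s0 \<sigma> = online_cost mtfe_step [] s0 \<sigma>"

definition TS :: "'a list \<Rightarrow> 'a list \<Rightarrow> nat" where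
  "TS s0 \<sigma> = online_cost ts_step [] s0 \<sigma>"

end

theory Submission
  imports Defs
begin

text \<open>
  The request sequence consists of k copies of the block a b a a a b a b a b a b a b a a.
  Started from the list [a, b], each of TS, MTFO and MTFE pays 10 on a block and ends it
  with the list [a, b] again (for MTFO and MTFE with both request counts even, for TS with
  a block as the most recent history), so the costs add up to 10k.  The offline algorithm
  that never changes [a, b] pays 1 exactly for each of the 6 requests to b in a block.
\<close>

definition block :: "'a \<Rightarrow> 'a \<Rightarrow> 'a list" where
  "block a b = [a,b,a,a,a,b,a,b,a,b,a,b,a,b,a,a]"

lemma set_block: "set (block a b) = {a, b}"
  by (auto simp: block_def)

lemma move_to_pos_self: "x \<in> set s \<Longrightarrow> move_to (pos s x) x s = s"
  by (induction s) (auto simp: move_to_def)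

lemma offline_exec_static:
  "set \<sigma> \<subseteq> set s \<Longrightarrow> offline_exec s \<sigma> (\<Sum>x\<leftarrow>\<sigma>. pos s x)"
proof (induction \<sigma>)
  case Nil
  show ?case by (simp add: offline_exec.Nil)
next
  case (Cons x rs)
  have "offline_exec s (x # rs) (length ([] :: nat list) + pos s x + (\<Sum>y\<leftarrow>rs. pos s y))"
  proof (rule offline_exec.Cons[where sw = "[]" and j = "pos s x"])
    show "offline_exec (move_to (pos s x) x s) rs (\<Sum>y\<leftarrow>rs. pos s y)"
      using Cons by (simp add: move_to_pos_self)
  qed (simp_all add: swaps_def)
  then show ?case by simp
qed

lemma OPT_le_static_cost:
  "set \<sigma> \<subseteq> set s \<Longrightarrow> OPT s \<sigma> \<le> (\<Sum>x\<leftarrow>\<sigma>. pos s x)"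
  unfolding OPT_def by (rule Least_le) (rule offline_exec_static)

lemma sum_list_map_concat_replicate:
  "(\<Sum>x\<leftarrow>concat (replicate k xs). f x) = k * (\<Sum>x\<leftarrow>xs. f x)"
  by (induction k) simp_all

lemma online_cost_concat_replicate:
  assumes step: "\<And>h rest. P h \<Longrightarrow> online_cost A h s (xs @ rest) = c + online_cost A (h @ xs) s rest"
    and invariant: "\<And>h. P h \<Longrightarrow> P (h @ xs)"
    and "P h"
  shows "online_cost A h s (concat (replicate k xs)) = c * k"
  using \<open>P h\<close>
proof (induction k arbitrary: h)
  case 0
  show ?case by simp
next
  case (Suc k)
  then show ?case using step[OF Suc.prems] invariant[OF Suc.prems] by simp
qed

lemma mtfo_block:
  "\<lbrakk>a \<noteq> b; even (count_list h a); even (count_list h b)\<rbrakk> \<Longrightarrow>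
    online_cost mtfo_step h [a, b] (block a b @ rest)
      = 10 + online_cost mtfo_step (h @ block a b) [a, b] rest"
  by (simp add: block_def mtfo_step_def move_to_def)

lemma mtfe_block:
  "\<lbrakk>a \<noteq> b; even (count_list h a); even (count_list h b)\<rbrakk> \<Longrightarrow>
    online_cost mtfe_step h [a, b] (block a b @ rest)
      = 10 + online_cost mtfe_step (h @ block a b) [a, b] rest"
  by (simp add: block_def mtfe_step_def move_to_def)

text \<open>
  TS needs the history only back to the previous request of each item, so it suffices that
  the history is empty or ends with a block.
\<close>

lemma ts_block_Nil:
  "a \<noteq> b \<Longrightarrow>
    online_cost ts_step [] [a, b] (block a b @ rest)
      = 10 + online_cost ts_step (block a b) [a, b] rest"
  by (simp add: block_def ts_step_def move_to_def)

lemma ts_block_after_block: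
  "a \<noteq> b \<Longrightarrow>
    online_cost ts_step (g @ block a b) [a, b] (block a b @ rest)
      = 10 + online_cost ts_step (g @ block a b @ block a b) [a, b] rest"
  by (simp add: block_def ts_step_def move_to_def)

lemma count_list_block:
  "a \<noteq> b \<Longrightarrow> count_list (block a b) a = 10 \<and> count_list (block a b) b = 6"
  by (simp add: block_def)

lemma TS_block_replicate: "a \<noteq> b \<Longrightarrow> TS [a, b] (concat (replicate k (block a b))) = 10 * k"
  unfolding TS_def
  by (rule online_cost_concat_replicate[where P = "\<lambda>h. h = [] \<or> (\<exists>g. h = g @ block a b)"])
     (auto simp: ts_block_Nil ts_block_after_block)

lemma MTFO_block_replicate: "a \<noteq> b \<Longrightarrow> MTFO [a, b] (concat (replicate k (block a b))) = 10 * k"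
  unfolding MTFO_def
  by (rule online_cost_concat_replicate[where P = "\<lambda>h. even (count_list h a) \<and> even (count_list h b)"])
     (simp_all add: mtfo_block count_list_block)

lemma MTFE_block_replicate: "a \<noteq> b \<Longrightarrow> MTFE [a, b] (concat (replicate k (block a b))) = 10 * k"
  unfolding MTFE_def
  by (rule online_cost_concat_replicate[where P = "\<lambda>h. even (count_list h a) \<and> even (count_list h b)"])
     (simp_all add: mtfe_block count_list_block)

lemma OPT_block_replicate: "a \<noteq> b \<Longrightarrow> OPT [a, b] (concat (replicate k (block a b))) \<le> 6 * k"
proof -
  assume "a \<noteq> b"
  have "set (concat (replicate k (block a b))) \<subseteq> set [a, b]"
    by (simp add: set_block)
  then have "OPT [a, b] (concat (replicate k (block a b)))
      \<le> (\<Sum>x\<leftarrow>concat (replicate k (block a b)). pos [a, b] x)"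
    by (rule OPT_le_static_cost)
  also have "\<dots> = 6 * k"
    using \<open>a \<noteq> b\<close> by (simp add: sum_list_map_concat_replicate block_def)
  finally show ?thesis .
qed

theorem theorem4:
  fixes a b :: 'a and k :: nat
  assumes "a \<noteq> b" and "k > 0"
  shows "\<exists>\<sigma>. set \<sigma> \<subseteq> {a, b}
            \<and> TS [a, b] \<sigma> = 10 * k \<and> MTFO [a, b] \<sigma> = 10 * k \<and> MTFE [a, b] \<sigma> = 10 * k
            \<and> OPT [a, b] \<sigma> \<le> 6 * k
            \<and> 5 * OPT [a, b] \<sigma> \<le> 3 * TS [a, b] \<sigma>
            \<and> 5 * OPT [a, b] \<sigma> \<le> 3 * MTFO [a, b] \<sigma>
            \<and> 5 * OPT [a, b] \<sigma> \<le> 3 * MTFE [a, b] \<sigma>"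
proof (intro exI conjI)
  let ?\<sigma> = "concat (replicate k (block a b))"
  show "set ?\<sigma> \<subseteq> {a, b}"
    by (simp add: set_block)
  show TS: "TS [a, b] ?\<sigma> = 10 * k" and MTFO: "MTFO [a, b] ?\<sigma> = 10 * k"
    and MTFE: "MTFE [a, b] ?\<sigma> = 10 * k" and OPT: "OPT [a, b] ?\<sigma> \<le> 6 * k"
    using assms(1) by (rule TS_block_replicate MTFO_block_replicate MTFE_block_replicate
        OPT_block_replicate)+
  show "5 * OPT [a, b] ?\<sigma> \<le> 3 * TS [a, b] ?\<sigma>"
    and "5 * OPT [a, b] ?\<sigma> \<le> 3 * MTFO [a, b] ?\<sigma>"
    and "5 * OPT [a, b] ?\<sigma> \<le> 3 * MTFE [a, b] ?\<sigma>"
    using TS MTFO MTFE OPT by simp_all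
qed

end
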